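(* Assume the standing assumptions below. There exist a constant $\epsilon_b>0$ and a conditional distribution $\bar\pi_{o,b}(o_t,b_t\mid s_t;\theta)$ (for each $s_t\in\mathcal S$ and $\theta\in\Theta$ a probability mass function on $\mathcal O\times\{0,1\}$) such that for all $\theta\in\Theta$ and all $b_t\in\{0,1\}$, $s_t\in\mathcal S$, $o_{t-1},o_t\in\mathcal O$, $$0<\epsilon_b\zeta\,\bar\pi_{o,b}(o_t,b_t\mid s_t;\theta)\le\pi_b(b_t\mid s_t,o_{t-1};\theta_b)\,\bar\pi_{hi}(o_t\mid s_t,o_{t-1},b_t;\theta_{hi})\le\epsilon_b^{-1}|\mathcal O|\,\bar\pi_{o,b}(o_t,b_t\mid s_t;\theta).$$
   Context: $\mathcal S,\mathcal O$ are finite sets; $\Theta=\Theta_{hi}\times\Theta_{lo}\times\Theta_b$ is a convex compact subset of a Euclidean space, $\theta=(\theta_{hi},\theta_{lo},\theta_b)$. $\pi_{hi}(o\mid s;\theta_{hi})$ is a distribution on $\mathcal O$ and $\pi_b(b\mid s,o';\theta_b)$ a distribution on $\{0,1\}$. For a fixed $\zeta\in(0,1)$, $\bar\pi_{hi}(o_t\mid s_t,o_{t-1},b_t;\theta_{hi})$ equals $\pi_{hi}(o_t\mid s_t;\theta_{hi})$ if $b_t=1$, $1-\zeta+\zeta/|\mathcal O|$ if $b_t=0,o_t=o_{t-1}$, and $\zeta/|\mathcal O|$ if $b_t=0,o_t\ne o_{t-1}$. Standing assumptions: there is an open $\tilde\Theta\supseteq\Theta$ on which $\pi_{hi}$ and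 $\pi_b$ (and the low-level policy) are defined, strictly positive, and continuously differentiable in $\theta$ for all other arguments. *)

theory Defs
  imports "HOL-Analysis.Analysis"
begin

definition C1_on :: "'a::euclidean_space set \<Rightarrow> ('a \<Rightarrow> real) \<Rightarrow> bool" where
  "C1_on U f \<longleftrightarrow> (\<exists>f' :: 'a \<Rightarrow> 'a \<Rightarrow>\<^sub>L real.
      (\<forall>x\<in>U. (f has_derivative blinfun_apply (f' x)) (at x)) \<and> continuous_on U f')"

text \<open>The option-transition policy pi_hi_bar(o_t | s_t, o_{t-1}, b_t; theta_hi);
  b_t = 1 is rendered as True.\<close>
definition pi_hi_bar ::
  "real \<Rightarrow> ('h \<Rightarrow> 's \<Rightarrow> 'oc::finite \<Rightarrow> real) \<Rightarrow> 'h \<Rightarrow> 's \<Rightarrow> 'oc \<Rightarrow> bool \<Rightarrow> 'oc \<Rightarrow> real" where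
  "pi_hi_bar \<zeta> pi_hi th s op b oc =
     (if b then pi_hi th s oc
      else if oc = op then 1 - \<zeta> + \<zeta> / real CARD('oc)
      else \<zeta> / real CARD('oc))"

end

theory Submission
  imports Defs
begin

text \<open>On the compact parameter set the finitely many continuous, strictly positive termination
  probabilities \<open>pi_b\<close> are bounded below by some \<open>c > 0\<close>; take \<open>eps_b = min c (1/2)\<close>.
  The witness puts mass \<open>pi_hi(o | s) / 2\<close> on \<open>(o, b = 1)\<close> and the uniform mass \<open>1 / (2 |O|)\<close>
  on \<open>(o, b = 0)\<close>. For \<open>b = 1\<close> the product \<open>pi_b * pi_hi_bar\<close> equals \<open>pi_b * pi_hi\<close>; for \<open>b = 0\<close>
  the factor \<open>pi_hi_bar\<close> lies between \<open>\<zeta> / |O|\<close> and \<open>1\<close>. Either way the product is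
  within the constants \<open>c \<le> pi_b \<le> 1\<close> of the witness.\<close>

lemma C1_on_imp_continuous_on: "C1_on U f \<Longrightarrow> continuous_on U f"
  unfolding C1_on_def
  by (metis continuous_at_imp_continuous_on has_derivative_continuous)

lemma compact_pos_lower_bound:
  fixes f :: "'a::topological_space \<Rightarrow> real"
  assumes "compact K" "continuous_on K f" "\<And>x. x \<in> K \<Longrightarrow> 0 < f x"
  shows "\<exists>c>0. \<forall>x\<in>K. c \<le> f x"
proof (cases "K = {}")
  case False
  then obtain x0 where "x0 \<in> K" "\<forall>x\<in>K. f x0 \<le> f x"
    using continuous_attains_inf[OF assms(1) False assms(2)] by blast
  then show ?thesis using assms(3) by blast
qed (auto intro: exI[of _ 1])

lemma compact_pos_lower_bound_finite_family:
  fixes f :: "'i \<Rightarrow> 'a::topological_space \<Rightarrow> real"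
  assumes "finite I" "compact K"
    and "\<And>i. i \<in> I \<Longrightarrow> continuous_on K (f i)"
    and "\<And>i x. i \<in> I \<Longrightarrow> x \<in> K \<Longrightarrow> 0 < f i x"
  shows "\<exists>c>0. \<forall>i\<in>I. \<forall>x\<in>K. c \<le> f i x"
  using assms(1,3,4)
proof (induction I rule: finite_induct)
  case empty
  show ?case by (auto intro: exI[of _ 1])
next
  case (insert j I)
  then obtain c where c: "c > 0" "\<forall>i\<in>I. \<forall>x\<in>K. c \<le> f i x" by blast
  obtain d where d: "d > 0" "\<forall>x\<in>K. d \<le> f j x"
    using compact_pos_lower_bound[OF assms(2), of "f j"] insert.prems by blast
  show ?case
    using c d by (intro exI[of _ "min c d"]) (auto simp: min_le_iff_disj)
qed

lemma C1_on_pos_uniform_lower_bound: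
  fixes pi_b :: "'c::euclidean_space \<Rightarrow> 's::finite \<Rightarrow> 'oc::finite \<Rightarrow> bool \<Rightarrow> real"
  assumes "compact K" "K \<subseteq> U"
    and "\<And>s op b. C1_on U (\<lambda>th. pi_b th s op b)"
    and "\<And>th s op b. th \<in> U \<Longrightarrow> 0 < pi_b th s op b"
  shows "\<exists>c>0. \<forall>th\<in>K. \<forall>s op b. c \<le> pi_b th s op b"
proof -
  have "continuous_on K (\<lambda>th. pi_b th s op b)" for s op b
    by (rule continuous_on_subset[OF C1_on_imp_continuous_on[OF assms(3)] assms(2)])
  then have "\<exists>c>0. \<forall>k\<in>UNIV. \<forall>th\<in>K. c \<le> (\<lambda>(s, op, b) th. pi_b th s op b) k th"
    using assms by (intro compact_pos_lower_bound_finite_family) (auto split: prod.split)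
  then show ?thesis by fastforce
qed

lemma pi_hi_bar_True [simp]: "pi_hi_bar \<zeta> pi_hi th s op True oc = pi_hi th s oc"
  by (simp add: pi_hi_bar_def)

lemma pi_hi_bar_False_bounds:
  fixes pi_hi :: "'h \<Rightarrow> 's \<Rightarrow> 'oc::finite \<Rightarrow> real"
  assumes "0 \<le> \<zeta>" "\<zeta> \<le> 1"
  shows "\<zeta> / real CARD('oc) \<le> pi_hi_bar \<zeta> pi_hi th s op False oc"
    and "pi_hi_bar \<zeta> pi_hi th s op False oc \<le> 1"
proof -
  have "\<zeta> / real CARD('oc) \<le> \<zeta> / 1"
    using assms(1) by (intro divide_left_mono) (auto simp: Suc_leI)
  moreover have "\<zeta> \<le> real CARD('oc)"
    using assms(2) by (simp add: Suc_leI order_trans)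
  ultimately show "\<zeta> / real CARD('oc) \<le> pi_hi_bar \<zeta> pi_hi th s op False oc"
    and "pi_hi_bar \<zeta> pi_hi th s op False oc \<le> 1"
    using assms by (auto simp: pi_hi_bar_def simp del: divide_le_eq_1_pos)
qed

definition pi_ob_mix :: "('h \<Rightarrow> 's \<Rightarrow> 'oc::finite \<Rightarrow> real) \<Rightarrow> 'h \<Rightarrow> 's \<Rightarrow> 'oc \<Rightarrow> bool \<Rightarrow> real" where
  "pi_ob_mix pi_hi th s oc b = (if b then pi_hi th s oc / 2 else 1 / (2 * real CARD('oc)))"

lemma pi_ob_mix_nonneg: "0 \<le> pi_hi th s oc \<Longrightarrow> 0 \<le> pi_ob_mix pi_hi th s oc b"
  by (simp add: pi_ob_mix_def)

lemma pi_ob_mix_sum: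
  fixes pi_hi :: "'h \<Rightarrow> 's \<Rightarrow> 'oc::finite \<Rightarrow> real"
  assumes "(\<Sum>oc\<in>UNIV. pi_hi th s oc) = 1"
  shows "(\<Sum>oc\<in>UNIV. \<Sum>b\<in>UNIV. pi_ob_mix pi_hi th s oc b) = 1"
proof -
  have n: "0 < real CARD('oc)" by simp
  have "(\<Sum>oc\<in>UNIV. \<Sum>b\<in>UNIV. pi_ob_mix pi_hi th s oc b)
      = (\<Sum>oc\<in>UNIV. pi_hi th s oc) / 2 + real CARD('oc) * (1 / (2 * real CARD('oc)))"
    using n by (simp add: pi_ob_mix_def UNIV_bool sum.distrib sum_divide_distrib)
  then show ?thesis using assms n by simp
qed

lemma pi_ob_mix_lower_bound:
  fixes pi_hi :: "'h \<Rightarrow> 's \<Rightarrow> 'oc::finite \<Rightarrow> real"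
  assumes "0 < \<zeta>" "\<zeta> \<le> 1" "0 < eps" "eps \<le> p" "0 < pi_hi th s oc"
  shows "0 < eps * \<zeta> * pi_ob_mix pi_hi th s oc b"
    and "eps * \<zeta> * pi_ob_mix pi_hi th s oc b \<le> p * pi_hi_bar \<zeta> pi_hi th s op b oc"
proof -
  have n: "real CARD('oc) > 0" by simp
  show "0 < eps * \<zeta> * pi_ob_mix pi_hi th s oc b"
    using assms n by (simp add: pi_ob_mix_def)
  show "eps * \<zeta> * pi_ob_mix pi_hi th s oc b \<le> p * pi_hi_bar \<zeta> pi_hi th s op b oc"
  proof (cases b)
    case True
    have "eps * \<zeta> \<le> p"
      using mult_left_le[of \<zeta> eps] assms by linarith
    then have "eps * \<zeta> * (pi_hi th s oc / 2) \<le> p * pi_hi th s oc"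
      using assms by (intro mult_mono) auto
    then show ?thesis using True by (simp add: pi_ob_mix_def)
  next
    case False
    have "eps * \<zeta> * (1 / (2 * real CARD('oc))) \<le> p * (\<zeta> / real CARD('oc))"
      using assms n by (simp add: field_simps)
    also have "\<dots> \<le> p * pi_hi_bar \<zeta> pi_hi th s op b oc"
      using pi_hi_bar_False_bounds(1)[of \<zeta> pi_hi] assms False
      by (intro mult_left_mono) auto
    finally show ?thesis using False by (simp add: pi_ob_mix_def)
  qed
qed

lemma pi_ob_mix_upper_bound:
  fixes pi_hi :: "'h \<Rightarrow> 's \<Rightarrow> 'oc::finite \<Rightarrow> real"
  assumes "0 \<le> \<zeta>" "\<zeta> \<le> 1" "0 < eps" "eps \<le> 1/2" "0 \<le> p" "p \<le> 1" "0 \<le> pi_hi th s oc"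
  shows "p * pi_hi_bar \<zeta> pi_hi th s op b oc \<le> real CARD('oc) / eps * pi_ob_mix pi_hi th s oc b"
proof -
  have n: "real CARD('oc) \<ge> 1" by (simp add: Suc_leI)
  have "eps * 2 \<le> real CARD('oc)"
    using assms(4) n by linarith
  then have half: "1 \<le> real CARD('oc) / eps * (1 / 2)"
    using assms(3) by (simp add: field_simps)
  show ?thesis
  proof (cases b)
    case True
    have "p * pi_hi th s oc \<le> 1 * pi_hi th s oc"
      using assms by (intro mult_right_mono) auto
    also have "\<dots> \<le> (real CARD('oc) / eps * (1 / 2)) * pi_hi th s oc"
      using half assms(7) by (intro mult_right_mono) auto
    finally show ?thesis using True by (simp add: pi_ob_mix_def)
  next
    case False
    have "0 \<le> pi_hi_bar \<zeta> pi_hi th s op False oc"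
      using pi_hi_bar_False_bounds(1)[of \<zeta> pi_hi] assms(1,2) n
      by (meson divide_nonneg_nonneg order_trans of_nat_0_le_iff)
    then have "p * pi_hi_bar \<zeta> pi_hi th s op False oc \<le> 1"
      using pi_hi_bar_False_bounds(2)[of \<zeta> pi_hi] assms by (intro mult_le_one) auto
    also have "\<dots> \<le> real CARD('oc) / eps * (1 / (2 * real CARD('oc)))"
      using assms(3,4) n by (simp add: field_simps)
    finally show ?thesis using False by (simp add: pi_ob_mix_def)
  qed
qed

lemma pi_ob_mix_sandwich:
  fixes pi_hi :: "'h \<Rightarrow> 's \<Rightarrow> 'oc::finite \<Rightarrow> real"
  assumes "0 < \<zeta>" "\<zeta> \<le> 1" "0 < eps" "eps \<le> 1/2" "eps \<le> p" "p \<le> 1" "0 < pi_hi th s oc"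
  shows "0 < eps * \<zeta> * pi_ob_mix pi_hi th s oc b \<and>
    eps * \<zeta> * pi_ob_mix pi_hi th s oc b \<le> p * pi_hi_bar \<zeta> pi_hi th s op b oc \<and>
    p * pi_hi_bar \<zeta> pi_hi th s op b oc \<le> real CARD('oc) / eps * pi_ob_mix pi_hi th s oc b"
  by (intro conjI pi_ob_mix_lower_bound pi_ob_mix_upper_bound) (use assms in auto)

theorem lemma7:
  fixes \<zeta> :: real
    and Theta_hi :: "'h::euclidean_space set"
    and Theta_lo :: "'l::euclidean_space set"
    and Theta_b :: "'c::euclidean_space set"
    and U_hi :: "'h set" and U_lo :: "'l set" and U_b :: "'c set"
    and pi_hi :: "'h \<Rightarrow> 's::finite \<Rightarrow> 'oc::finite \<Rightarrow> real"
    and pi_b :: "'c \<Rightarrow> 's \<Rightarrow> 'oc \<Rightarrow> bool \<Rightarrow> real"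
    and pi_lo :: "'l \<Rightarrow> 's \<Rightarrow> 'oc \<Rightarrow> 'act \<Rightarrow> real"
  assumes zeta: "0 < \<zeta>" "\<zeta> < 1"
    and Theta_convex: "convex (Theta_hi \<times> Theta_lo \<times> Theta_b)"
    and Theta_compact: "compact (Theta_hi \<times> Theta_lo \<times> Theta_b)"
    and U_open: "open U_hi" "open U_lo" "open U_b"
    and U_sup: "Theta_hi \<subseteq> U_hi" "Theta_lo \<subseteq> U_lo" "Theta_b \<subseteq> U_b"
    and pi_hi_pos: "\<And>th s oc. th \<in> U_hi \<Longrightarrow> 0 < pi_hi th s oc"
    and pi_hi_sum: "\<And>th s. th \<in> U_hi \<Longrightarrow> (\<Sum>oc\<in>UNIV. pi_hi th s oc) = 1"
    and pi_hi_C1: "\<And>s oc. C1_on U_hi (\<lambda>th. pi_hi th s oc)"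
    and pi_b_pos: "\<And>th s op b. th \<in> U_b \<Longrightarrow> 0 < pi_b th s op b"
    and pi_b_sum: "\<And>th s op. th \<in> U_b \<Longrightarrow> pi_b th s op True + pi_b th s op False = 1"
    and pi_b_C1: "\<And>s op b. C1_on U_b (\<lambda>th. pi_b th s op b)"
    and pi_lo_pos: "\<And>th s oc a. th \<in> U_lo \<Longrightarrow> 0 < pi_lo th s oc a"
    and pi_lo_C1: "\<And>s oc a. C1_on U_lo (\<lambda>th. pi_lo th s oc a)"
  shows "\<exists>eps_b > 0. \<exists>pi_ob :: 'h \<times> 'l \<times> 'c \<Rightarrow> 's \<Rightarrow> 'oc \<Rightarrow> bool \<Rightarrow> real.
    (\<forall>\<theta> \<in> Theta_hi \<times> Theta_lo \<times> Theta_b. \<forall>s.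
        (\<forall>oc b. 0 \<le> pi_ob \<theta> s oc b) \<and> (\<Sum>oc\<in>UNIV. \<Sum>b\<in>UNIV. pi_ob \<theta> s oc b) = 1) \<and>
    (\<forall>th_hi th_lo th_b. (th_hi, th_lo, th_b) \<in> Theta_hi \<times> Theta_lo \<times> Theta_b \<longrightarrow>
      (\<forall>b s op oc.
        0 < eps_b * \<zeta> * pi_ob (th_hi, th_lo, th_b) s oc b \<and>
        eps_b * \<zeta> * pi_ob (th_hi, th_lo, th_b) s oc b
          \<le> pi_b th_b s op b * pi_hi_bar \<zeta> pi_hi th_hi s op b oc \<and>
        pi_b th_b s op b * pi_hi_bar \<zeta> pi_hi th_hi s op b oc
          \<le> real CARD('oc) / eps_b * pi_ob (th_hi, th_lo, th_b) s oc b))"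
proof -
  let ?Theta = "Theta_hi \<times> Theta_lo \<times> Theta_b"
  \<comment> \<open>Not \<open>Theta_b\<close> itself: it need not be compact when another factor is empty.\<close>
  have "compact (snd ` snd ` ?Theta)"
    using Theta_compact by (intro compact_continuous_image continuous_intros)
  moreover have "snd ` snd ` ?Theta \<subseteq> U_b"
    using U_sup(3) by auto
  ultimately have "\<exists>c>0. \<forall>th\<in>snd ` snd ` ?Theta. \<forall>s op b. c \<le> pi_b th s op b"
    using pi_b_C1 pi_b_pos by (rule C1_on_pos_uniform_lower_bound)
  then obtain c where c: "c > 0" and c_le: "\<forall>th\<in>snd ` snd ` ?Theta. \<forall>s op b. c \<le> pi_b th s op b"
    by blast
  have pi_b_le_1: "pi_b th s op b \<le> 1" if "th \<in> U_b" for th s op b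
    using pi_b_sum[OF that, of s op] pi_b_pos[OF that, of s op True] pi_b_pos[OF that, of s op False]
    by (cases b) auto
  define eps where "eps = min c (1/2)"
  show ?thesis
  proof (intro exI[of _ eps] exI[of _ "\<lambda>\<theta>. pi_ob_mix pi_hi (fst \<theta>)"] conjI ballI allI impI)
    show "0 < eps" using c by (simp add: eps_def)
  next
    fix \<theta> s oc b assume "\<theta> \<in> ?Theta"
    then have "fst \<theta> \<in> U_hi" using U_sup by auto
    then show "0 \<le> pi_ob_mix pi_hi (fst \<theta>) s oc b"
      and "(\<Sum>oc\<in>UNIV. \<Sum>b\<in>UNIV. pi_ob_mix pi_hi (fst \<theta>) s oc b) = 1"
      by (simp_all add: pi_ob_mix_nonneg pi_ob_mix_sum pi_hi_pos pi_hi_sum less_imp_le)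
  next
    fix th_hi th_lo th_b b s op oc assume \<theta>: "(th_hi, th_lo, th_b) \<in> ?Theta"
    then have "th_b \<in> snd ` snd ` ?Theta"
      by (metis image_eqI snd_conv)
    then have "eps \<le> pi_b th_b s op b"
      using c_le by (auto simp: eps_def min_le_iff_disj)
    moreover have "th_hi \<in> U_hi" "th_b \<in> U_b"
      using \<theta> U_sup by auto
    ultimately show "0 < eps * \<zeta> * pi_ob_mix pi_hi (fst (th_hi, th_lo, th_b)) s oc b"
      and "eps * \<zeta> * pi_ob_mix pi_hi (fst (th_hi, th_lo, th_b)) s oc b
          \<le> pi_b th_b s op b * pi_hi_bar \<zeta> pi_hi th_hi s op b oc"
      and "pi_b th_b s op b * pi_hi_bar \<zeta> pi_hi th_hi s op b oc
          \<le> real CARD('oc) / eps * pi_ob_mix pi_hi (fst (th_hi, th_lo, th_b)) s oc b"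
      using pi_ob_mix_sandwich[of \<zeta> eps "pi_b th_b s op b" pi_hi th_hi s oc b op]
        zeta c pi_hi_pos pi_b_le_1 by (auto simp: eps_def)
  qed
qed

end
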